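(* Let $f:\mathcal{X}\times\mathcal{Y}\to\mathcal{V}=\{0,1,\dots,m-1\}$ and define $f_n^{\mathsf t}:\mathcal{X}^n\times\mathcal{Y}^n\to\mathcal{P}_n(\mathcal{V})$ by $f_n^{\mathsf t}(\mathbf{x},\mathbf{y})=P_{(f(x_1,y_1),\dots,f(x_n,y_n))}$ (the type of the sequence of symbol-wise values). Define $\hat f^{\mathsf t}:\mathcal{X}\times\mathcal{Y}\to\mathcal{V}\cup\{m\}$ by $\hat f^{\mathsf t}(x,y)=m$ if $f(x,\cdot)$ is constant on $\mathcal{Y}$, and $\hat f^{\mathsf t}(x,y)=f(x,y)$ otherwise. Then $f_n^{\mathsf t}$ is $\overline{\mathcal{X}}_{\hat f^{\mathsf t}}$-informative.
   Context: Finite alphabets $\mathcal{X},\mathcal{Y}$. The type of $\mathbf{s}\in\mathcal{S}^n$ is $P_{\mathbf{s}}(s)=|\{i:s_i=s\}|/n$; $\mathcal{P}_n(\mathcal{S})$ is the set of types of sequences in $\mathcal{S}^n$. For a function $g$ on $\mathcal{X}\times\mathcal{Y}$, $\overline{\mathcal{X}}_g$ is the partition of $\mathcal{X}$ in which $x,\hat x$ lie in the same cell iff $g(x,y)=g(\hat x,y)$ for all $y$. For a partition $\overline{\mathcal{X}}$ and $x\in\mathcal{X}$, $[x]_{\overline{\mathcal{X}}}$ is the cell containing $x$; $[\mathbf{x}]_{\overline{\mathcal{X}}}$ is applied componentwise. For $a\in\mathcal{X}$, $a\mathbf{x}^{(-i)}$ is $\mathbf{x}$ with its $i$th entry replaced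 by $a$; similarly $b\mathbf{y}^{(-i)}$. For a permutation $\sigma$ of $[1:n]$, $\sigma(\mathbf{x})$ has $i$th entry $x_{\sigma(i)}$. $f_n:\mathcal{X}^n\times\mathcal{Y}^n\to\mathcal{Z}_n$ is $\overline{\mathcal{X}}$-informative if (1) for each $i\in[1:n]$ there is a map $\xi_n^{(i)}:\mathcal{Z}_n^{|\mathcal{Y}|}\to\overline{\mathcal{X}}$ with $\xi_n^{(i)}\big((f_n(a\mathbf{x}^{(-i)},b\mathbf{y}^{(-i)}):b\in\mathcal{Y})\big)=[a]_{\overline{\mathcal{X}}}$ for all $a\in\mathcal{X}$, $(\mathbf{x},\mathbf{y})$; and (2) $f_n(\sigma(\mathbf{x}),\mathbf{y})=f_n(\mathbf{x},\mathbf{y})$ for all $(\mathbf{x},\mathbf{y})$ and all permutations $\sigma$ with $[\sigma(\mathbf{x})]_{\overline{\mathcal{X}}}=[\mathbf{x}]_{\overline{\mathcal{X}}}$. *)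

theory Defs
  imports Complex_Main "HOL-Combinatorics.Permutations"
begin

text \<open>Sequences in X^n are lists of length n (indices 0..n-1).
A partition of X is a set of cells ('x set set).\<close>

definition partition_of :: "('x \<Rightarrow> 'y \<Rightarrow> 'v) \<Rightarrow> 'x set set" where
  "partition_of g = UNIV // {(x, x'). \<forall>y. g x y = g x' y}"

definition cell :: "'x set set \<Rightarrow> 'x \<Rightarrow> 'x set" where
  "cell P a = (THE B. B \<in> P \<and> a \<in> B)"

definition permute_seq :: "(nat \<Rightarrow> nat) \<Rightarrow> 'a list \<Rightarrow> 'a list" where
  "permute_seq \<sigma> xs = map (\<lambda>i. xs ! \<sigma> i) [0..<length xs]"

definition informative ::
  "nat \<Rightarrow> 'x set set \<Rightarrow> ('x list \<Rightarrow> 'y list \<Rightarrow> 'z) \<Rightarrow> bool" where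
  "informative n P fn \<longleftrightarrow>
     (\<forall>i<n. \<exists>\<xi> :: ('y \<Rightarrow> 'z) \<Rightarrow> 'x set.
        \<forall>a xs ys. length xs = n \<longrightarrow> length ys = n \<longrightarrow>
          \<xi> (\<lambda>b. fn (xs[i := a]) (ys[i := b])) = cell P a) \<and>
     (\<forall>xs ys \<sigma>. length xs = n \<longrightarrow> length ys = n \<longrightarrow> \<sigma> permutes {0..<n} \<longrightarrow>
        map (cell P) (permute_seq \<sigma> xs) = map (cell P) xs \<longrightarrow>
        fn (permute_seq \<sigma> xs) ys = fn xs ys)"

definition fn_type :: "nat \<Rightarrow> ('x \<Rightarrow> 'y \<Rightarrow> nat) \<Rightarrow> 'x list \<Rightarrow> 'y list \<Rightarrow> (nat \<Rightarrow> real)" where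
  "fn_type n f xs ys = (\<lambda>v. real (card {i. i < n \<and> f (xs ! i) (ys ! i) = v}) / real n)"

definition f_hat :: "nat \<Rightarrow> ('x \<Rightarrow> 'y \<Rightarrow> nat) \<Rightarrow> 'x \<Rightarrow> 'y \<Rightarrow> nat" where
  "f_hat m f x y = (if (\<forall>y1 y2. f x y1 = f x y2) then m else f x y)"

end

theory Submission
  imports Defs
begin

text \<open>
  Replacing the \<open>i\<close>-th pair by \<open>(a, b)\<close> and letting \<open>b\<close> vary moves the type by
  \<open>(\<delta>(f a b1) - \<delta>(f a b2)) / n\<close>, where \<open>\<delta>(v)\<close> is the point mass at \<open>v\<close>. These
  increments reveal whether the row \<open>f a\<close> is constant and, if it is not, the row itself;
  that is exactly the cell of \<open>a\<close> for \<open>f_hat m f\<close>. A permutation preserving these cells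
  maps each non-constant row to an equal row and permutes the positions carrying constant
  rows among themselves; there the value does not depend on \<open>y\<close>, so the sequence of values
  is itself permuted and its type is unchanged.
\<close>

lemma cell_partition_of: "cell (partition_of g) a = {x. g x = g a}"
proof -
  let ?R = "{(x, x'). \<forall>y. g x y = g x' y}"
  have equiv: "equiv UNIV ?R"
    unfolding equiv_def refl_on_def sym_def trans_def by auto
  have "cell (partition_of g) a = ?R `` {a}"
    unfolding cell_def
  proof (rule the_equality)
    have "?R `` {a} \<in> partition_of g"
      unfolding partition_of_def by (rule quotientI) simp
    then show "?R `` {a} \<in> partition_of g \<and> a \<in> ?R `` {a}" by simp
  next
    fix B assume B: "B \<in> partition_of g \<and> a \<in> B"
    then obtain x where "B = ?R `` {x}"
      unfolding partition_of_def by (auto elim: quotientE)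
    with B show "B = ?R `` {a}"
      using equiv_class_eq[OF equiv] by auto
  qed
  then show ?thesis by (auto simp: fun_eq_iff)
qed

lemma cell_partition_of_eq_iff:
  "cell (partition_of g) a = cell (partition_of g) b \<longleftrightarrow> g a = g b"
proof
  assume same_cell: "cell (partition_of g) a = cell (partition_of g) b"
  have "a \<in> cell (partition_of g) a" by (simp add: cell_partition_of)
  with same_cell show "g a = g b" by (simp add: cell_partition_of)
qed (simp add: cell_partition_of)

lemma f_hat_eq_iff:
  "f_hat m f x = f_hat m f x' \<longleftrightarrow>
     ((\<forall>y1 y2. f x y1 = f x y2) \<and> (\<forall>y1 y2. f x' y1 = f x' y2)) \<or> f x = f x'"
proof -
  have row: "f_hat m f z = (if \<forall>y1 y2. f z y1 = f z y2 then (\<lambda>_. m) else f z)" for z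
    by (rule ext) (simp add: f_hat_def)
  show ?thesis unfolding row by (metis (no_types, lifting))
qed

lemma of_bool_diff_eq_iff:
  "(\<forall>w. (of_bool (u = w) - of_bool (v = w) :: real) = of_bool (u' = w) - of_bool (v' = w))
     \<longleftrightarrow> (u = v \<and> u' = v') \<or> (u = u' \<and> v = v')"
  by force

lemma both_constant_or_eq_iff:
  fixes p q :: "'a \<Rightarrow> 'b"
  shows "(\<forall>b1 b2. (p b1 = p b2 \<and> q b1 = q b2) \<or> (p b1 = q b1 \<and> p b2 = q b2))
     \<longleftrightarrow> ((\<forall>b1 b2. p b1 = p b2) \<and> (\<forall>b1 b2. q b1 = q b2)) \<or> p = q"
  by (metis ext)

lemma card_less_remove:
  fixes i n :: nat
  assumes "i < n"
  shows "card {j. j < n \<and> P j} = card {j. j < n \<and> j \<noteq> i \<and> P j} + of_bool (P i)"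
proof -
  have rest: "{j. j < n \<and> j \<noteq> i \<and> P j} = {j. j < n \<and> P j} - {i}" by blast
  show ?thesis
  proof (cases "P i")
    case True
    then have "i \<in> {j. j < n \<and> P j}" using assms by simp
    from card.remove[OF _ this] True show ?thesis unfolding rest by simp
  qed (simp add: rest)
qed

lemma fn_type_list_update:
  assumes "i < n" "length xs = n" "length ys = n"
  shows "fn_type n f (xs[i := a]) (ys[i := b]) v =
    (real (card {j. j < n \<and> j \<noteq> i \<and> f (xs ! j) (ys ! j) = v}) + of_bool (f a b = v)) / real n"
proof -
  have "card {j. j < n \<and> f (xs[i := a] ! j) (ys[i := b] ! j) = v}
      = card {j. j < n \<and> j \<noteq> i \<and> f (xs[i := a] ! j) (ys[i := b] ! j) = v}
        + of_bool (f (xs[i := a] ! i) (ys[i := b] ! i) = v)"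
    by (rule card_less_remove[OF assms(1)])
  also have "{j. j < n \<and> j \<noteq> i \<and> f (xs[i := a] ! j) (ys[i := b] ! j) = v}
      = {j. j < n \<and> j \<noteq> i \<and> f (xs ! j) (ys ! j) = v}"
    by (rule Collect_cong) auto
  also have "f (xs[i := a] ! i) (ys[i := b] ! i) = f a b"
    using assms by simp
  finally show ?thesis unfolding fn_type_def by simp
qed

definition cell_decoder :: "nat \<Rightarrow> ('x \<Rightarrow> 'y \<Rightarrow> nat) \<Rightarrow> ('y \<Rightarrow> nat \<Rightarrow> real) \<Rightarrow> 'x set" where
  "cell_decoder n f F =
     {x. \<forall>b1 b2 v. F b1 v - F b2 v = (of_bool (f x b1 = v) - of_bool (f x b2 = v)) / real n}"

lemma cell_decoder_fn_type:
  assumes "i < n" "length xs = n" "length ys = n"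
  shows "cell_decoder n f (\<lambda>b. fn_type n f (xs[i := a]) (ys[i := b]))
           = cell (partition_of (f_hat m f)) a"
proof -
  have increment: "fn_type n f (xs[i := a]) (ys[i := b1]) v - fn_type n f (xs[i := a]) (ys[i := b2]) v
      = (of_bool (f a b1 = v) - of_bool (f a b2 = v)) / real n" for b1 b2 v
    unfolding fn_type_list_update[OF assms] diff_divide_distrib[symmetric] by simp
  have "x \<in> cell_decoder n f (\<lambda>b. fn_type n f (xs[i := a]) (ys[i := b]))
    \<longleftrightarrow> (\<forall>b1 b2 v. (of_bool (f a b1 = v) - of_bool (f a b2 = v) :: real)
                     = of_bool (f x b1 = v) - of_bool (f x b2 = v))" for x
    using assms(1) unfolding cell_decoder_def increment by (simp add: divide_cancel_right)
  also have "\<dots> x \<longleftrightarrow> f_hat m f a = f_hat m f x" for x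
    unfolding of_bool_diff_eq_iff both_constant_or_eq_iff f_hat_eq_iff by blast
  finally show ?thesis
    unfolding cell_partition_of by (intro set_eqI) (simp add: eq_commute)
qed

lemma card_filter_permutes:
  assumes "\<tau> permutes S"
  shows "card {j \<in> S. P (\<tau> j)} = card {j \<in> S. P j}"
proof -
  have "{j \<in> S. P j} \<subseteq> \<tau> ` {j \<in> S. P (\<tau> j)}"
  proof
    fix j assume "j \<in> {j \<in> S. P j}"
    then show "j \<in> \<tau> ` {j \<in> S. P (\<tau> j)}"
      using permutes_inverses(1)[OF assms] permutes_in_image[OF permutes_inv[OF assms]]
      by (intro image_eqI[of _ _ "inv \<tau> j"]) auto
  qed
  then have image: "\<tau> ` {j \<in> S. P (\<tau> j)} = {j \<in> S. P j}"
    using permutes_in_image[OF assms] by auto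
  have "inj_on \<tau> {j \<in> S. P (\<tau> j)}"
    using permutes_inj[OF assms] by (rule inj_on_subset) simp
  from card_image[OF this] show ?thesis by (simp add: image)
qed

lemma fn_type_permute_seq:
  assumes "length xs = n" "length ys = n" "\<sigma> permutes {0..<n}"
    and cells: "\<forall>j<n. f_hat m f (xs ! \<sigma> j) = f_hat m f (xs ! j)"
  shows "fn_type n f (permute_seq \<sigma> xs) ys = fn_type n f xs ys"
proof -
  define C where "C = {j \<in> {0..<n}. \<forall>y1 y2. f (xs ! j) y1 = f (xs ! j) y2}"
  have "\<sigma> ` C \<subseteq> C"
    using cells permutes_in_image[OF assms(3)] unfolding C_def f_hat_eq_iff by auto
  moreover have "inj_on \<sigma> C"
    using permutes_inj[OF assms(3)] by (rule inj_on_subset) simp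
  ultimately have "bij_betw \<sigma> C C"
    by (simp add: bij_betw_def endo_inj_surj C_def)
  then have \<tau>: "restrict_id \<sigma> C permutes {0..<n}"
    by (rule permutes_subset[OF permutes_restrict_id]) (auto simp: C_def)
  have value_moved: "f (xs ! \<sigma> j) (ys ! j) = f (xs ! restrict_id \<sigma> C j) (ys ! restrict_id \<sigma> C j)"
    if "j < n" for j
  proof (cases "j \<in> C")
    case True
    with \<open>\<sigma> ` C \<subseteq> C\<close> show ?thesis unfolding C_def by auto
  next
    case False
    then show ?thesis using cells that unfolding C_def f_hat_eq_iff by auto
  qed
  have "card {j. j < n \<and> f (permute_seq \<sigma> xs ! j) (ys ! j) = v}
      = card {j \<in> {0..<n}. f (xs ! restrict_id \<sigma> C j) (ys ! restrict_id \<sigma> C j) = v}" for v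
    using assms(1) value_moved unfolding permute_seq_def by (intro arg_cong[where f = card]) auto
  also have "\<dots> v = card {j. j < n \<and> f (xs ! j) (ys ! j) = v}" for v
    unfolding card_filter_permutes[OF \<tau>, of "\<lambda>k. f (xs ! k) (ys ! k) = v"]
    by (rule arg_cong[where f = card]) auto
  finally show ?thesis unfolding fn_type_def by simp
qed

theorem proposition3:
  fixes f :: "'x::finite \<Rightarrow> 'y::finite \<Rightarrow> nat" and m n :: nat
  assumes "\<forall>x y. f x y < m"
  shows "informative n (partition_of (f_hat m f)) (fn_type n f)"
  unfolding informative_def
proof (intro conjI allI impI)
  fix i assume "i < n"
  then show "\<exists>\<xi>. \<forall>a xs ys. length xs = n \<longrightarrow> length ys = n \<longrightarrow>
      \<xi> (\<lambda>b. fn_type n f (xs[i := a]) (ys[i := b])) = cell (partition_of (f_hat m f)) a"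
    by (intro exI[of _ "cell_decoder n f"] allI impI) (rule cell_decoder_fn_type)
next
  fix xs :: "'x list" and ys :: "'y list" and \<sigma>
  assume lengths: "length xs = n" "length ys = n" and \<sigma>: "\<sigma> permutes {0..<n}"
    and same_cells: "map (cell (partition_of (f_hat m f))) (permute_seq \<sigma> xs)
       = map (cell (partition_of (f_hat m f))) xs"
  have "f_hat m f (xs ! \<sigma> j) = f_hat m f (xs ! j)" if "j < n" for j
  proof -
    from same_cells have "map (cell (partition_of (f_hat m f))) (permute_seq \<sigma> xs) ! j
        = map (cell (partition_of (f_hat m f))) xs ! j" by simp
    with that lengths show ?thesis
      by (simp add: permute_seq_def cell_partition_of_eq_iff)
  qed
  with lengths \<sigma> show "fn_type n f (permute_seq \<sigma> xs) ys = fn_type n f xs ys"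
    by (intro fn_type_permute_seq) auto
qed

end
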